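(* Let $a,b$ be non-zero constants with $a\neq b$, and let $w=w(x,y,z)$ be a function on an open set $B\subset\mathbb{R}^3$ with continuous second derivatives and $w_x\neq 0$. On $B\times\mathbb{R}^2$ with coordinates $(x,y,z,p_0,p_1)$ consider the bivectors $P_0,P_1$ with components (so that $\{f,g\}_i=\sum_{\alpha,\beta}P_i^{\alpha\beta}\partial_\alpha f\,\partial_\beta g$) \[ P_0= \begin{pmatrix} 0&0&0&-w_z/w_x&-w_y/w_x\\ 0&0&0&0&1\\ 0&0&0&1&0\\ w_z/w_x&0&-1&0&0\\ w_y/w_x&-1&0&0&0 \end{pmatrix}, \qquad P_1= \begin{pmatrix} 0&0&0&0&0\\ 0&0&0&0&b\\ 0&0&0&a&0\\ 0&0&-a&0&0\\ 0&-b&0&0&0 \end{pmatrix}. \] Then $P_0$ and $P_1$ define a compatible Poisson pencil (i.e. $P_0+\lambda P_1$ satisfies the Jacobi identity for all $\lambda$) if and only if $w$ satisfies the dispersionless Hirota equation \[ (b-a)\,w_x w_{yz}+a\, w_y w_{zx}-b\, w_z w_{xy}=0. \]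
   Context: A bivector $P$ defines a bracket $\{f,g\}=\sum_{\alpha,\beta}P^{\alpha\beta}\partial_\alpha f\partial_\beta g$; it is Poisson if this bracket satisfies the Jacobi identity. A compatible Poisson pencil is a pair of Poisson bivectors whose every linear combination $P_0+\lambda P_1$ is Poisson. *)

theory Defs
  imports "HOL-Analysis.Analysis"
begin

definition pd :: "'n::finite \<Rightarrow> (real^'n \<Rightarrow> real) \<Rightarrow> real^'n \<Rightarrow> real" where
  "pd i f u = frechet_derivative f (at u) (axis i 1)"

definition C1_on :: "(real^'n::finite) set \<Rightarrow> (real^'n \<Rightarrow> real) \<Rightarrow> bool" where
  "C1_on U f \<longleftrightarrow> (\<forall>u\<in>U. f differentiable (at u)) \<and> (\<forall>i. continuous_on U (pd i f))"

definition C2_on :: "(real^'n::finite) set \<Rightarrow> (real^'n \<Rightarrow> real) \<Rightarrow> bool" where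
  "C2_on U f \<longleftrightarrow> C1_on U f \<and> (\<forall>i. C1_on U (pd i f))"

definition pbracket :: "(real^'n \<Rightarrow> real^'n^'n) \<Rightarrow> (real^'n::finite \<Rightarrow> real) \<Rightarrow> (real^'n \<Rightarrow> real) \<Rightarrow> real^'n \<Rightarrow> real" where
  "pbracket P f g u = (\<Sum>a\<in>UNIV. \<Sum>b\<in>UNIV. P u $ a $ b * pd a f u * pd b g u)"

definition is_poisson :: "(real^'n::finite) set \<Rightarrow> (real^'n \<Rightarrow> real^'n^'n) \<Rightarrow> bool" where
  "is_poisson U P \<longleftrightarrow> (\<forall>f g h. C2_on U f \<and> C2_on U g \<and> C2_on U h \<longrightarrow>
     (\<forall>u\<in>U. pbracket P f (pbracket P g h) u + pbracket P g (pbracket P h f) u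
             + pbracket P h (pbracket P f g) u = 0))"

definition compatible_poisson_pencil :: "(real^'n::finite) set \<Rightarrow> (real^'n \<Rightarrow> real^'n^'n) \<Rightarrow> (real^'n \<Rightarrow> real^'n^'n) \<Rightarrow> bool" where
  "compatible_poisson_pencil U P0 P1 \<longleftrightarrow> is_poisson U P0 \<and> is_poisson U P1 \<and>
     (\<forall>t::real. is_poisson U (\<lambda>u. P0 u + t *\<^sub>R P1 u))"

definition proj3 :: "real^5 \<Rightarrow> real^3" where
  "proj3 u = vector [u$1, u$2, u$3]"

definition P0_mat :: "(real^3 \<Rightarrow> real) \<Rightarrow> real^5 \<Rightarrow> real^5^5" where
  "P0_mat w u = (let q = proj3 u; wx = pd 1 w q; wy = pd 2 w q; wz = pd 3 w q in
     vector [vector [0, 0, 0, -wz/wx, -wy/wx],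
             vector [0, 0, 0, 0, 1],
             vector [0, 0, 0, 1, 0],
             vector [wz/wx, 0, -1, 0, 0],
             vector [wy/wx, -1, 0, 0, 0]])"

definition P1_mat :: "real \<Rightarrow> real \<Rightarrow> real^5 \<Rightarrow> real^5^5" where
  "P1_mat a b u =
     vector [vector [0, 0, 0, 0, 0],
             vector [0, 0, 0, 0, b],
             vector [0, 0, 0, a, 0],
             vector [0, 0, -a, 0, 0],
             vector [0, -b, 0, 0, 0]]"

end

theory Submission
  imports Defs
begin

text \<open>
  For an antisymmetric bivector \<open>P\<close> with differentiable coefficients, the cyclic sum
  \<open>{f,{g,h}} + {g,{h,f}} + {h,{f,g}}\<close> is a trilinear form in \<open>df, dg, dh\<close>: the terms
  containing second derivatives cancel in pairs, by antisymmetry of \<open>P\<close> and symmetry of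
  Hessians, and the remaining coefficient is the Schouten tensor
  \<open>\<Sum>\<^sub>e P\<^sup>a\<^sup>e \<partial>\<^sub>e P\<^sup>b\<^sup>c + cyclic\<close>. Testing with coordinate functions shows that \<open>P\<close> is Poisson
  iff this tensor vanishes.

  The only non-constant entries of \<open>P\<^sub>0 + t P\<^sub>1\<close> are \<open>w\<^sub>z/w\<^sub>x\<close> and \<open>w\<^sub>y/w\<^sub>x\<close>, which depend on
  \<open>x, y, z\<close> only and couple \<open>x\<close> with \<open>p\<^sub>0\<close> and \<open>p\<^sub>1\<close>. Hence the Schouten tensor of the pencil is
  supported on the permutations of \<open>(x, p\<^sub>0, p\<^sub>1)\<close>, where it equals \<open>t\<close> times the Hirota
  expression divided by \<open>w\<^sub>x\<^sup>2\<close>. So \<open>P\<^sub>0\<close> and the constant \<open>P\<^sub>1\<close> are always Poisson, and the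
  pencil is Poisson exactly when the Hirota equation holds.
\<close>

section \<open>Partial derivatives\<close>

lemma has_derivative_imp_pd: "(f has_derivative f') (at u) \<Longrightarrow> pd i f u = f' (axis i 1)"
  unfolding pd_def using frechet_derivative_at by metis

lemma has_real_derivative_pd_along_axis:
  fixes f :: "real^'n::finite \<Rightarrow> real"
  assumes "f differentiable at (x + s *\<^sub>R axis i 1)"
  shows "((\<lambda>s. f (x + s *\<^sub>R axis i 1)) has_real_derivative pd i f (x + s *\<^sub>R axis i 1)) (at s)"
proof -
  let ?v = "axis i 1 :: real^'n" and ?f' = "frechet_derivative f (at (x + s *\<^sub>R axis i 1))"
  have d: "(f has_derivative ?f') (at (x + s *\<^sub>R ?v))"
    using assms frechet_derivative_works by blast
  have "((\<lambda>s. x + s *\<^sub>R ?v) has_derivative (\<lambda>s. s *\<^sub>R ?v)) (at s)"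
    by (auto intro!: derivative_eq_intros)
  from has_derivative_compose[OF this d]
  have "((\<lambda>s. f (x + s *\<^sub>R ?v)) has_derivative (\<lambda>y. ?f' (y *\<^sub>R ?v))) (at s)"
    by (simp add: o_def)
  moreover have "linear ?f'"
    using d has_derivative_linear by blast
  ultimately have "((\<lambda>s. f (x + s *\<^sub>R ?v)) has_derivative (\<lambda>y. y * ?f' ?v)) (at s)"
    by (simp add: linear_scale)
  then show ?thesis
    unfolding has_field_derivative_def pd_def
    by (rule has_derivative_eq_rhs) (auto simp: fun_eq_iff mult.commute)
qed

lemma second_difference_mvt:
  fixes f :: "real^'n::finite \<Rightarrow> real"
  assumes df: "\<forall>y\<in>ball u d. f differentiable at y"
    and dfi: "\<forall>y\<in>ball u d. pd i f differentiable at y"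
    and h: "0 < h" "2 * h < d"
  shows "\<exists>p\<in>ball u d. f (u + h *\<^sub>R axis i 1 + h *\<^sub>R axis j 1) - f (u + h *\<^sub>R axis j 1)
     - f (u + h *\<^sub>R axis i 1) + f u = h * h * pd j (pd i f) p"
proof -
  let ?ei = "axis i (1::real) :: real^'n" and ?ej = "axis j (1::real) :: real^'n"
  have inb: "u + s *\<^sub>R ?ei + t *\<^sub>R ?ej \<in> ball u d" if "0 \<le> s" "s \<le> h" "0 \<le> t" "t \<le> h" for s t
  proof -
    have "norm (s *\<^sub>R ?ei + t *\<^sub>R ?ej) \<le> norm (s *\<^sub>R ?ei) + norm (t *\<^sub>R ?ej)"
      by (rule norm_triangle_ineq)
    also have "\<dots> = s + t" using that by simp
    moreover have "dist u (u + (s *\<^sub>R ?ei + t *\<^sub>R ?ej)) = norm (s *\<^sub>R ?ei + t *\<^sub>R ?ej)"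
      by (metis add_diff_cancel_left' dist_commute dist_norm)
    ultimately show ?thesis using that h by (simp add: add.assoc)
  qed
  define g where "g s = f (u + h *\<^sub>R ?ej + s *\<^sub>R ?ei) - f (u + s *\<^sub>R ?ei)" for s
  have gd: "(g has_real_derivative (pd i f (u + h *\<^sub>R ?ej + s *\<^sub>R ?ei) - pd i f (u + s *\<^sub>R ?ei))) (at s)"
    if "0 \<le> s" "s \<le> h" for s
    unfolding g_def
  proof (intro DERIV_diff has_real_derivative_pd_along_axis)
    show "f differentiable at (u + h *\<^sub>R ?ej + s *\<^sub>R ?ei)"
      using df inb[of s h] that h by (simp add: algebra_simps)
    show "f differentiable at (u + s *\<^sub>R ?ei)"
      using df inb[of s 0] that h by (simp add: algebra_simps)
  qed
  obtain s where s: "0 < s" "s < h"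
    "g h - g 0 = (h - 0) * (pd i f (u + h *\<^sub>R ?ej + s *\<^sub>R ?ei) - pd i f (u + s *\<^sub>R ?ei))"
    using MVT2[of 0 h g, OF h(1) gd] by auto
  define k where "k t = pd i f (u + s *\<^sub>R ?ei + t *\<^sub>R ?ej)" for t
  have kd: "(k has_real_derivative pd j (pd i f) (u + s *\<^sub>R ?ei + t *\<^sub>R ?ej)) (at t)"
    if "0 \<le> t" "t \<le> h" for t
    unfolding k_def
    by (rule has_real_derivative_pd_along_axis) (use dfi inb[of s t] that s in auto)
  obtain t where t: "0 < t" "t < h" "k h - k 0 = (h - 0) * pd j (pd i f) (u + s *\<^sub>R ?ei + t *\<^sub>R ?ej)"
    using MVT2[of 0 h k, OF h(1) kd] by auto
  have "f (u + h *\<^sub>R ?ei + h *\<^sub>R ?ej) - f (u + h *\<^sub>R ?ej) - f (u + h *\<^sub>R ?ei) + f u = g h - g 0"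
    by (simp add: g_def algebra_simps)
  also have "\<dots> = h * (k h - k 0)" using s(3) by (simp add: k_def algebra_simps)
  also have "\<dots> = h * h * pd j (pd i f) (u + s *\<^sub>R ?ei + t *\<^sub>R ?ej)" using t(3) by simp
  finally show ?thesis using inb[of s t] s t by (intro bexI[where x="u + s *\<^sub>R ?ei + t *\<^sub>R ?ej"]) auto
qed

text \<open>Schwarz's theorem: the second difference of \<open>f\<close> is \<open>h\<^sup>2\<close> times either mixed partial at
  some point near \<open>u\<close>, and both mixed partials are continuous at \<open>u\<close>.\<close>

lemma C2_on_pd_commute:
  fixes f :: "real^'n::finite \<Rightarrow> real"
  assumes U: "open U" "u \<in> U" and f: "C2_on U f"
  shows "pd i (pd j f) u = pd j (pd i f) u"
proof (rule ccontr)
  assume ne: "pd i (pd j f) u \<noteq> pd j (pd i f) u"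
  define e where "e = \<bar>pd i (pd j f) u - pd j (pd i f) u\<bar> / 2"
  have e: "e > 0" using ne by (simp add: e_def)
  have "isCont (pd i (pd j f)) u" "isCont (pd j (pd i f)) u"
    using f U unfolding C2_on_def C1_on_def by (auto simp: continuous_on_eq_continuous_at)
  then obtain d1 d2 where d1: "d1 > 0" "\<forall>y. dist y u < d1 \<longrightarrow> dist (pd i (pd j f) y) (pd i (pd j f) u) < e"
    and d2: "d2 > 0" "\<forall>y. dist y u < d2 \<longrightarrow> dist (pd j (pd i f) y) (pd j (pd i f) u) < e"
    using e unfolding continuous_at_eps_delta by (metis (no_types))
  obtain d3 where d3: "d3 > 0" "ball u d3 \<subseteq> U" using U open_contains_ball by blast
  define d where "d = min d1 (min d2 d3)"
  have d: "d > 0" "ball u d \<subseteq> U" using d1 d2 d3 by (auto simp: d_def)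
  define h where "h = d / 3"
  have h: "0 < h" "2 * h < d" using d by (auto simp: h_def)
  have df: "\<forall>y\<in>ball u d. f differentiable at y" and dfi: "\<forall>y\<in>ball u d. pd i f differentiable at y"
    and dfj: "\<forall>y\<in>ball u d. pd j f differentiable at y"
    using f d unfolding C2_on_def C1_on_def by auto
  obtain p where p: "p \<in> ball u d" "f (u + h *\<^sub>R axis i 1 + h *\<^sub>R axis j 1) - f (u + h *\<^sub>R axis j 1)
     - f (u + h *\<^sub>R axis i 1) + f u = h * h * pd j (pd i f) p"
    using second_difference_mvt[OF df dfi h] by blast
  obtain q where q: "q \<in> ball u d" "f (u + h *\<^sub>R axis j 1 + h *\<^sub>R axis i 1) - f (u + h *\<^sub>R axis i 1)
     - f (u + h *\<^sub>R axis j 1) + f u = h * h * pd i (pd j f) q"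
    using second_difference_mvt[OF df dfj h, of i] by blast
  have "h * h * pd j (pd i f) p = h * h * pd i (pd j f) q"
    using p(2) q(2) by (simp add: algebra_simps)
  then have eq: "pd j (pd i f) p = pd i (pd j f) q" using h by simp
  have "dist p u < d2" "dist q u < d1" using p q by (auto simp: d_def dist_commute)
  then have "\<bar>pd j (pd i f) p - pd j (pd i f) u\<bar> < e" "\<bar>pd i (pd j f) q - pd i (pd j f) u\<bar> < e"
    using d1 d2 by (auto simp: dist_real_def)
  moreover have "\<And>A B X Y::real. X = Y \<Longrightarrow> \<bar>X - B\<bar> < \<bar>A - B\<bar> / 2 \<Longrightarrow> \<bar>Y - A\<bar> < \<bar>A - B\<bar> / 2 \<Longrightarrow> False"
    by (auto simp: abs_if split: if_splits)
  ultimately show False using eq unfolding e_def by blast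
qed

lemma pd_const: "pd i (\<lambda>v::real^'n::finite. c) u = 0"
proof -
  have "((\<lambda>v::real^'n. c) has_derivative (\<lambda>x. 0)) (at u)" by simp
  from has_derivative_imp_pd[OF this] show ?thesis by simp
qed

lemma has_derivative_vec_nth: "((\<lambda>v::real^'n::finite. v $ a) has_derivative (\<lambda>x. x $ a)) (at u)"
  using bounded_linear_vec_nth bounded_linear_imp_has_derivative by blast

lemma pd_vec_nth: "pd i (\<lambda>v::real^'n::finite. v $ a) = (\<lambda>v. if i = a then 1 else 0)"
  by (auto simp: fun_eq_iff has_derivative_imp_pd[OF has_derivative_vec_nth] axis_def)

lemma C2_on_vec_nth: "C2_on U (\<lambda>v::real^'n::finite. v $ a)"
  unfolding C2_on_def C1_on_def pd_vec_nth
  using has_derivative_vec_nth by (auto simp: differentiable_def pd_const)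

section \<open>The Jacobi identity and the Schouten tensor\<close>

text \<open>In components, \<open>schouten P\<close> is half of the Schouten bracket \<open>[P, P]\<close>.\<close>

definition schouten :: "(real^'n::finite \<Rightarrow> real^'n^'n) \<Rightarrow> real^'n \<Rightarrow> 'n \<Rightarrow> 'n \<Rightarrow> 'n \<Rightarrow> real" where
  "schouten P u a b c = (\<Sum>e\<in>UNIV. P u $ a $ e * pd e (\<lambda>v. P v $ b $ c) u
     + P u $ b $ e * pd e (\<lambda>v. P v $ c $ a) u + P u $ c $ e * pd e (\<lambda>v. P v $ a $ b) u)"

lemma sum_rotate3:
  fixes W :: "'n::finite \<Rightarrow> 'n \<Rightarrow> 'n \<Rightarrow> real"
  shows "(\<Sum>x\<in>UNIV. \<Sum>y\<in>UNIV. \<Sum>z\<in>UNIV. W y z x) = (\<Sum>y\<in>UNIV. \<Sum>z\<in>UNIV. \<Sum>x\<in>UNIV. W y z x)"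
proof -
  have "(\<Sum>x\<in>UNIV. \<Sum>y\<in>UNIV. \<Sum>z\<in>UNIV. W y z x) = (\<Sum>y\<in>UNIV. \<Sum>x\<in>UNIV. \<Sum>z\<in>UNIV. W y z x)"
    by (rule sum.swap)
  also have "\<dots> = (\<Sum>y\<in>UNIV. \<Sum>z\<in>UNIV. \<Sum>x\<in>UNIV. W y z x)"
    by (rule sum.cong[OF refl], rule sum.swap)
  finally show ?thesis .
qed

lemma sum_bracket_contract:
  fixes P :: "'n::finite \<Rightarrow> 'n \<Rightarrow> real" and D :: "'n \<Rightarrow> 'n \<Rightarrow> 'n \<Rightarrow> real"
  shows "(\<Sum>d\<in>UNIV. \<Sum>e\<in>UNIV. P d e * X d * (\<Sum>b\<in>UNIV. \<Sum>c\<in>UNIV. D e b c * Y b * Z c))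
    = (\<Sum>a\<in>UNIV. \<Sum>b\<in>UNIV. \<Sum>c\<in>UNIV. (\<Sum>e\<in>UNIV. P a e * D e b c) * X a * Y b * Z c)"
proof -
  have "(\<Sum>d\<in>UNIV. \<Sum>e\<in>UNIV. P d e * X d * (\<Sum>b\<in>UNIV. \<Sum>c\<in>UNIV. D e b c * Y b * Z c))
     = (\<Sum>d\<in>UNIV. \<Sum>e\<in>UNIV. \<Sum>b\<in>UNIV. \<Sum>c\<in>UNIV. P d e * D e b c * X d * Y b * Z c)"
    by (simp add: sum_distrib_left mult_ac)
  also have "\<dots> = (\<Sum>d\<in>UNIV. \<Sum>b\<in>UNIV. \<Sum>c\<in>UNIV. \<Sum>e\<in>UNIV. P d e * D e b c * X d * Y b * Z c)"
    by (rule sum.cong[OF refl], rule sum_rotate3)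
  also have "\<dots> = (\<Sum>a\<in>UNIV. \<Sum>b\<in>UNIV. \<Sum>c\<in>UNIV. (\<Sum>e\<in>UNIV. P a e * D e b c) * X a * Y b * Z c)"
    by (simp add: sum_distrib_right)
  finally show ?thesis .
qed

text \<open>The two terms are exchanged by renaming \<open>(d, e, b, c) \<mapsto> (b, c, e, d)\<close>, which flips
  the sign through one transposition of \<open>P\<close> and leaves the Hessian \<open>Z2\<close> unchanged.\<close>

lemma sum_second_order_cancel:
  fixes P :: "'n::finite \<Rightarrow> 'n \<Rightarrow> real"
  assumes anti: "\<And>a b. P a b = - P b a" and sym: "\<And>i j. Z2 i j = Z2 j i"
  shows "(\<Sum>d\<in>UNIV. \<Sum>e\<in>UNIV. P d e * X d * (\<Sum>b\<in>UNIV. \<Sum>c\<in>UNIV. P b c * Y b * Z2 e c))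
     + (\<Sum>d\<in>UNIV. \<Sum>e\<in>UNIV. P d e * Y d * (\<Sum>b\<in>UNIV. \<Sum>c\<in>UNIV. P b c * Z2 e b * X c)) = 0"
proof -
  define V where "V d e b c = P d e * P b c * Y d * X c * Z2 e b" for d e b c
  have first: "(\<Sum>d\<in>UNIV. \<Sum>e\<in>UNIV. P d e * X d * (\<Sum>b\<in>UNIV. \<Sum>c\<in>UNIV. P b c * Y b * Z2 e c))
     = (\<Sum>d\<in>UNIV. \<Sum>e\<in>UNIV. \<Sum>b\<in>UNIV. \<Sum>c\<in>UNIV. P d e * P b c * X d * Y b * Z2 e c)"
    by (simp add: sum_distrib_left mult_ac)
  have second: "(\<Sum>d\<in>UNIV. \<Sum>e\<in>UNIV. P d e * Y d * (\<Sum>b\<in>UNIV. \<Sum>c\<in>UNIV. P b c * Z2 e b * X c))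
     = (\<Sum>d\<in>UNIV. \<Sum>e\<in>UNIV. \<Sum>b\<in>UNIV. \<Sum>c\<in>UNIV. V d e b c)"
    by (simp add: V_def sum_distrib_left mult_ac)
  have "(\<Sum>d\<in>UNIV. \<Sum>e\<in>UNIV. \<Sum>b\<in>UNIV. \<Sum>c\<in>UNIV. V d e b c)
      = (\<Sum>d\<in>UNIV. \<Sum>e\<in>UNIV. \<Sum>c\<in>UNIV. \<Sum>b\<in>UNIV. V d e b c)"
    by (intro sum.cong[OF refl] sum.swap)
  also have "\<dots> = (\<Sum>d\<in>UNIV. \<Sum>c\<in>UNIV. \<Sum>b\<in>UNIV. \<Sum>e\<in>UNIV. V d e b c)"
    by (rule sum.cong[OF refl], rule sum_rotate3)
  also have "\<dots> = (\<Sum>c\<in>UNIV. \<Sum>b\<in>UNIV. \<Sum>d\<in>UNIV. \<Sum>e\<in>UNIV. V d e b c)"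
    by (rule sum_rotate3)
  also have "\<dots> = - (\<Sum>d\<in>UNIV. \<Sum>e\<in>UNIV. \<Sum>b\<in>UNIV. \<Sum>c\<in>UNIV. P d e * P b c * X d * Y b * Z2 e c)"
  proof -
    have "V b c e d = - (P d e * P b c * X d * Y b * Z2 e c)" for d e b c
      unfolding V_def using anti[of e d] sym[of c e] by simp
    then show ?thesis by (simp only: sum_negf)
  qed
  finally show ?thesis using first second by simp
qed

lemma sum_bracket_split:
  fixes P :: "'n::finite \<Rightarrow> 'n \<Rightarrow> real"
  shows "(\<Sum>d\<in>UNIV. \<Sum>e\<in>UNIV. P d e * X d * (\<Sum>b\<in>UNIV. \<Sum>c\<in>UNIV.
       D e b c * Y b * Z c + P b c * Y2 e b * Z c + P b c * Y b * Z2 e c))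
   = (\<Sum>d\<in>UNIV. \<Sum>e\<in>UNIV. P d e * X d * (\<Sum>b\<in>UNIV. \<Sum>c\<in>UNIV. D e b c * Y b * Z c))
   + (\<Sum>d\<in>UNIV. \<Sum>e\<in>UNIV. P d e * X d * (\<Sum>b\<in>UNIV. \<Sum>c\<in>UNIV. P b c * Y2 e b * Z c))
   + (\<Sum>d\<in>UNIV. \<Sum>e\<in>UNIV. P d e * X d * (\<Sum>b\<in>UNIV. \<Sum>c\<in>UNIV. P b c * Y b * Z2 e c))"
  by (simp add: sum.distrib distrib_left)

text \<open>The Jacobiator written out with the product rule: \<open>D e b c\<close> stands for
  \<open>\<partial>\<^sub>e P\<^sup>b\<^sup>c\<close>, and \<open>Fs, Gs, Hs\<close> for the Hessians of \<open>f, g, h\<close>.\<close>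

lemma jacobiator_sum_expansion:
  fixes P :: "'n::finite \<Rightarrow> 'n \<Rightarrow> real"
  assumes anti: "\<And>a b. P a b = - P b a"
    and sF: "\<And>i j. Fs i j = Fs j i" and sG: "\<And>i j. Gs i j = Gs j i" and sH: "\<And>i j. Hs i j = Hs j i"
  shows "(\<Sum>d\<in>UNIV. \<Sum>e\<in>UNIV. P d e * F d * (\<Sum>b\<in>UNIV. \<Sum>c\<in>UNIV.
       D e b c * G b * H c + P b c * Gs e b * H c + P b c * G b * Hs e c))
   + (\<Sum>d\<in>UNIV. \<Sum>e\<in>UNIV. P d e * G d * (\<Sum>b\<in>UNIV. \<Sum>c\<in>UNIV.
       D e b c * H b * F c + P b c * Hs e b * F c + P b c * H b * Fs e c))
   + (\<Sum>d\<in>UNIV. \<Sum>e\<in>UNIV. P d e * H d * (\<Sum>b\<in>UNIV. \<Sum>c\<in>UNIV.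
       D e b c * F b * G c + P b c * Fs e b * G c + P b c * F b * Gs e c))
   = (\<Sum>a\<in>UNIV. \<Sum>b\<in>UNIV. \<Sum>c\<in>UNIV.
       (\<Sum>e\<in>UNIV. P a e * D e b c + P b e * D e c a + P c e * D e a b) * F a * G b * H c)"
proof -
  define K where "K a b c = (\<Sum>e\<in>UNIV. P a e * D e b c)" for a b c
  have f1: "(\<Sum>d\<in>UNIV. \<Sum>e\<in>UNIV. P d e * F d * (\<Sum>b\<in>UNIV. \<Sum>c\<in>UNIV. D e b c * G b * H c))
    = (\<Sum>a\<in>UNIV. \<Sum>b\<in>UNIV. \<Sum>c\<in>UNIV. K a b c * F a * G b * H c)"
    unfolding K_def by (rule sum_bracket_contract)
  have "(\<Sum>d\<in>UNIV. \<Sum>e\<in>UNIV. P d e * G d * (\<Sum>b\<in>UNIV. \<Sum>c\<in>UNIV. D e b c * H b * F c))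
    = (\<Sum>b\<in>UNIV. \<Sum>c\<in>UNIV. \<Sum>a\<in>UNIV. K b c a * G b * H c * F a)"
    unfolding K_def by (rule sum_bracket_contract)
  also have "\<dots> = (\<Sum>a\<in>UNIV. \<Sum>b\<in>UNIV. \<Sum>c\<in>UNIV. K b c a * G b * H c * F a)"
    by (rule sum_rotate3[symmetric])
  finally have f2: "(\<Sum>d\<in>UNIV. \<Sum>e\<in>UNIV. P d e * G d * (\<Sum>b\<in>UNIV. \<Sum>c\<in>UNIV. D e b c * H b * F c))
    = (\<Sum>a\<in>UNIV. \<Sum>b\<in>UNIV. \<Sum>c\<in>UNIV. K b c a * F a * G b * H c)"
    by (simp add: mult_ac)
  have "(\<Sum>d\<in>UNIV. \<Sum>e\<in>UNIV. P d e * H d * (\<Sum>b\<in>UNIV. \<Sum>c\<in>UNIV. D e b c * F b * G c))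
    = (\<Sum>c\<in>UNIV. \<Sum>a\<in>UNIV. \<Sum>b\<in>UNIV. K c a b * H c * F a * G b)"
    unfolding K_def by (rule sum_bracket_contract)
  also have "\<dots> = (\<Sum>a\<in>UNIV. \<Sum>b\<in>UNIV. \<Sum>c\<in>UNIV. K c a b * H c * F a * G b)"
    by (rule sum_rotate3)
  finally have f3: "(\<Sum>d\<in>UNIV. \<Sum>e\<in>UNIV. P d e * H d * (\<Sum>b\<in>UNIV. \<Sum>c\<in>UNIV. D e b c * F b * G c))
    = (\<Sum>a\<in>UNIV. \<Sum>b\<in>UNIV. \<Sum>c\<in>UNIV. K c a b * F a * G b * H c)"
    by (simp add: mult_ac)
  have K: "(\<Sum>a\<in>UNIV. \<Sum>b\<in>UNIV. \<Sum>c\<in>UNIV. K a b c * F a * G b * H c)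
    + (\<Sum>a\<in>UNIV. \<Sum>b\<in>UNIV. \<Sum>c\<in>UNIV. K b c a * F a * G b * H c)
    + (\<Sum>a\<in>UNIV. \<Sum>b\<in>UNIV. \<Sum>c\<in>UNIV. K c a b * F a * G b * H c)
    = (\<Sum>a\<in>UNIV. \<Sum>b\<in>UNIV. \<Sum>c\<in>UNIV.
       (\<Sum>e\<in>UNIV. P a e * D e b c + P b e * D e c a + P c e * D e a b) * F a * G b * H c)"
    unfolding K_def by (simp add: sum.distrib distrib_right)
  show ?thesis
    unfolding sum_bracket_split
    using f1 f2 f3 K sum_second_order_cancel[of P Hs F G, OF anti sH]
      sum_second_order_cancel[of P Fs G H, OF anti sF] sum_second_order_cancel[of P Gs H F, OF anti sG]
    by linarith
qed

lemma pbracket_has_derivative: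
  fixes P :: "real^'n::finite \<Rightarrow> real^'n^'n"
  assumes dP: "\<And>a b. (\<lambda>v. P v $ a $ b) differentiable at u"
    and dg: "\<And>i. pd i g differentiable at u" and dh: "\<And>i. pd i h differentiable at u"
  shows "(pbracket P g h has_derivative (\<lambda>x. \<Sum>b\<in>UNIV. \<Sum>c\<in>UNIV.
      frechet_derivative (\<lambda>v. P v $ b $ c) (at u) x * pd b g u * pd c h u
      + P u $ b $ c * frechet_derivative (pd b g) (at u) x * pd c h u
      + P u $ b $ c * pd b g u * frechet_derivative (pd c h) (at u) x)) (at u)"
proof -
  have "((\<lambda>v. P v $ b $ c * pd b g v * pd c h v) has_derivative (\<lambda>x.
      frechet_derivative (\<lambda>v. P v $ b $ c) (at u) x * pd b g u * pd c h u
      + P u $ b $ c * frechet_derivative (pd b g) (at u) x * pd c h u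
      + P u $ b $ c * pd b g u * frechet_derivative (pd c h) (at u) x)) (at u)" for b c
  proof -
    have "((\<lambda>v. P v $ b $ c) has_derivative frechet_derivative (\<lambda>v. P v $ b $ c) (at u)) (at u)"
      "(pd b g has_derivative frechet_derivative (pd b g) (at u)) (at u)"
      "(pd c h has_derivative frechet_derivative (pd c h) (at u)) (at u)"
      using dP dg dh frechet_derivative_works by blast+
    from has_derivative_mult[OF has_derivative_mult[OF this(1,2)] this(3)] show ?thesis
      by (rule has_derivative_eq_rhs) (auto simp: fun_eq_iff algebra_simps)
  qed
  then show ?thesis
    unfolding pbracket_def[abs_def] by (intro has_derivative_sum)
qed

lemma pd_pbracket:
  fixes P :: "real^'n::finite \<Rightarrow> real^'n^'n"
  assumes "\<And>a b. (\<lambda>v. P v $ a $ b) differentiable at u"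
    and "\<And>i. pd i g differentiable at u" and "\<And>i. pd i h differentiable at u"
  shows "pd e (pbracket P g h) u = (\<Sum>b\<in>UNIV. \<Sum>c\<in>UNIV.
      pd e (\<lambda>v. P v $ b $ c) u * pd b g u * pd c h u
      + P u $ b $ c * pd e (pd b g) u * pd c h u
      + P u $ b $ c * pd b g u * pd e (pd c h) u)"
  using has_derivative_imp_pd[OF pbracket_has_derivative[OF assms]] unfolding pd_def .

lemma jacobiator_eq_schouten_sum:
  fixes P :: "real^'n::finite \<Rightarrow> real^'n^'n"
  assumes U: "open U" "u \<in> U"
    and dP: "\<And>a b. (\<lambda>v. P v $ a $ b) differentiable at u"
    and anti: "\<And>a b. P u $ a $ b = - P u $ b $ a"
    and f: "C2_on U f" and g: "C2_on U g" and h: "C2_on U h"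
  shows "pbracket P f (pbracket P g h) u + pbracket P g (pbracket P h f) u
             + pbracket P h (pbracket P f g) u
    = (\<Sum>a\<in>UNIV. \<Sum>b\<in>UNIV. \<Sum>c\<in>UNIV. schouten P u a b c * pd a f u * pd b g u * pd c h u)"
proof -
  have df: "\<And>i. pd i f differentiable at u" and dg: "\<And>i. pd i g differentiable at u"
    and dh: "\<And>i. pd i h differentiable at u"
    using f g h U unfolding C2_on_def C1_on_def by auto
  show ?thesis
    unfolding pbracket_def[of P f "pbracket P g h" u] pbracket_def[of P g "pbracket P h f" u]
      pbracket_def[of P h "pbracket P f g" u]
    unfolding pd_pbracket[OF dP dg dh] pd_pbracket[OF dP dh df] pd_pbracket[OF dP df dg]
    unfolding schouten_def
    by (rule jacobiator_sum_expansion[where P="\<lambda>a b. P u $ a $ b" and Fs="\<lambda>i j. pd i (pd j f) u"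
        and Gs="\<lambda>i j. pd i (pd j g) u" and Hs="\<lambda>i j. pd i (pd j h) u", OF anti])
       (auto intro: C2_on_pd_commute[OF U f] C2_on_pd_commute[OF U g] C2_on_pd_commute[OF U h])
qed

lemma is_poisson_iff_schouten_eq_0:
  fixes P :: "real^'n::finite \<Rightarrow> real^'n^'n"
  assumes U: "open U"
    and dP: "\<And>u a b. u \<in> U \<Longrightarrow> (\<lambda>v. P v $ a $ b) differentiable at u"
    and anti: "\<And>u a b. u \<in> U \<Longrightarrow> P u $ a $ b = - P u $ b $ a"
  shows "is_poisson U P \<longleftrightarrow> (\<forall>u\<in>U. \<forall>a b c. schouten P u a b c = 0)"
proof
  assume Pois: "is_poisson U P"
  show "\<forall>u\<in>U. \<forall>a b c. schouten P u a b c = 0"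
  proof (intro ballI allI)
    fix u a b c assume u: "u \<in> U"
    have "pbracket P (\<lambda>v. v $ a) (pbracket P (\<lambda>v. v $ b) (\<lambda>v. v $ c)) u
       + pbracket P (\<lambda>v. v $ b) (pbracket P (\<lambda>v. v $ c) (\<lambda>v. v $ a)) u
       + pbracket P (\<lambda>v. v $ c) (pbracket P (\<lambda>v. v $ a) (\<lambda>v. v $ b)) u = 0"
      using Pois u C2_on_vec_nth unfolding is_poisson_def by blast
    moreover have "\<And>x::real. x * (if p then 1 else 0) = (if p then x else 0)" for p
      by simp
    ultimately show "schouten P u a b c = 0"
      by (subst (asm) jacobiator_eq_schouten_sum[OF U u dP anti C2_on_vec_nth C2_on_vec_nth C2_on_vec_nth])
         (use u in \<open>simp_all add: pd_vec_nth\<close>)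
  qed
next
  assume "\<forall>u\<in>U. \<forall>a b c. schouten P u a b c = 0"
  then show "is_poisson U P"
    unfolding is_poisson_def by (simp add: jacobiator_eq_schouten_sum[OF U _ dP anti])
qed

section \<open>The Hirota pencil\<close>

lemma exhaust_5:
  fixes x :: 5
  shows "x = 1 \<or> x = 2 \<or> x = 3 \<or> x = 4 \<or> x = 5"
proof (induct x)
  case (of_int z)
  then have "z = 0 \<or> z = 1 \<or> z = 2 \<or> z = 3 \<or> z = 4" by fastforce
  then show ?case by auto
qed

lemma UNIV_5: "UNIV = {1, 2, 3, 4, 5::5}"
  using exhaust_5 by auto

lemma sum_5: "sum f (UNIV::5 set) = f 1 + f 2 + f 3 + f 4 + f 5"
  unfolding UNIV_5 by (simp add: ac_simps)

lemma vector_5 [simp]: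
  "(vector [x1,x2,x3,x4,x5] :: ('a::zero)^5) $ 1 = x1"
  "(vector [x1,x2,x3,x4,x5] :: ('a::zero)^5) $ 2 = x2"
  "(vector [x1,x2,x3,x4,x5] :: ('a::zero)^5) $ 3 = x3"
  "(vector [x1,x2,x3,x4,x5] :: ('a::zero)^5) $ 4 = x4"
  "(vector [x1,x2,x3,x4,x5] :: ('a::zero)^5) $ 5 = x5"
  unfolding vector_def by simp_all

lemma proj3_nth [simp]: "proj3 u $ 1 = u $ 1" "proj3 u $ 2 = u $ 2" "proj3 u $ 3 = u $ 3"
  unfolding proj3_def by simp_all

lemma bounded_linear_proj3: "bounded_linear proj3"
proof -
  have "linear proj3"
    by (rule linearI) (simp_all add: vec_eq_iff forall_3)
  then show ?thesis
    using linear_conv_bounded_linear by blast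
qed

lemma open_proj3_vimage: "open B \<Longrightarrow> open {u. proj3 u \<in> B}"
  using continuous_open_vimage[OF _ linear_continuous_at[OF bounded_linear_proj3]]
  by (simp add: vimage_def)

lemma proj3_axis:
  "proj3 (axis 1 1) = axis 1 1" "proj3 (axis 2 1) = axis 2 1" "proj3 (axis 3 1) = axis 3 1"
  "proj3 (axis 4 1) = 0" "proj3 (axis 5 1) = 0"
  by (simp_all add: vec_eq_iff forall_3 axis_def)

lemma has_derivative_comp_proj3:
  assumes "g differentiable at (proj3 u)"
  shows "((\<lambda>v. g (proj3 v)) has_derivative (\<lambda>x. frechet_derivative g (at (proj3 u)) (proj3 x))) (at u)"
proof -
  have "(g has_derivative frechet_derivative g (at (proj3 u))) (at (proj3 u))"
    using assms frechet_derivative_works by blast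
  from has_derivative_compose[OF bounded_linear_imp_has_derivative[OF bounded_linear_proj3] this]
  show ?thesis by (simp add: o_def)
qed

lemma ratio_pd_derivative:
  fixes w :: "real^3 \<Rightarrow> real"
  assumes w: "C2_on B w" and q: "q \<in> B" and w1: "pd 1 w q \<noteq> 0"
  shows "(\<lambda>q. pd j w q / pd 1 w q) differentiable at q"
    and "frechet_derivative (\<lambda>q. pd j w q / pd 1 w q) (at q) (axis k 1)
       = (pd k (pd j w) q * pd 1 w q - pd j w q * pd k (pd 1 w) q) / (pd 1 w q * pd 1 w q)"
proof -
  have "pd j w differentiable at q" and "pd 1 w differentiable at q"
    using w q unfolding C2_on_def C1_on_def by auto
  note h = has_derivative_divide'[OF this[unfolded frechet_derivative_works] w1]
  then show "(\<lambda>q. pd j w q / pd 1 w q) differentiable at q"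
    unfolding differentiable_def by blast
  show "frechet_derivative (\<lambda>q. pd j w q / pd 1 w q) (at q) (axis k 1)
       = (pd k (pd j w) q * pd 1 w q - pd j w q * pd k (pd 1 w) q) / (pd 1 w q * pd 1 w q)"
    unfolding frechet_derivative_at[OF h, symmetric] by (simp add: pd_def)
qed

definition pencil :: "(real^3 \<Rightarrow> real) \<Rightarrow> real \<Rightarrow> real \<Rightarrow> real \<Rightarrow> real^5 \<Rightarrow> real^5^5" where
  "pencil w a b t = (\<lambda>v. P0_mat w v + t *\<^sub>R P1_mat a b v)"

definition pencil_const :: "real \<Rightarrow> real \<Rightarrow> real \<Rightarrow> real^5^5" where
  "pencil_const t a b = vector [vector [0, 0, 0, 0, 0],
             vector [0, 0, 0, 0, 1 + t * b],
             vector [0, 0, 0, 1 + t * a, 0],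
             vector [0, 0, - 1 - t * a, 0, 0],
             vector [0, - 1 - t * b, 0, 0, 0]]"

definition E_x_p0 :: "real^5^5" where
  "E_x_p0 = vector [vector [0, 0, 0, -1, 0], vector [0, 0, 0, 0, 0], vector [0, 0, 0, 0, 0],
                vector [1, 0, 0, 0, 0], vector [0, 0, 0, 0, 0]]"

definition E_x_p1 :: "real^5^5" where
  "E_x_p1 = vector [vector [0, 0, 0, 0, -1], vector [0, 0, 0, 0, 0], vector [0, 0, 0, 0, 0],
                vector [0, 0, 0, 0, 0], vector [1, 0, 0, 0, 0]]"

lemma pencil_entry:
  "pencil w a b t v $ i $ j = pencil_const t a b $ i $ j
     + E_x_p0 $ i $ j * (pd 3 w (proj3 v) / pd 1 w (proj3 v))
     + E_x_p1 $ i $ j * (pd 2 w (proj3 v) / pd 1 w (proj3 v))"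
  using exhaust_5[of i] exhaust_5[of j]
  by (elim disjE)
     (simp_all add: pencil_def P0_mat_def P1_mat_def Let_def pencil_const_def E_x_p0_def E_x_p1_def)

lemma pencil_antisym: "pencil w a b t v $ i $ j = - pencil w a b t v $ j $ i"
  unfolding pencil_entry
  using exhaust_5[of i] exhaust_5[of j]
  by (elim disjE) (simp_all add: pencil_const_def E_x_p0_def E_x_p1_def)

definition sign145 :: "5 \<Rightarrow> 5 \<Rightarrow> 5 \<Rightarrow> real" where
  "sign145 x y z = (if (x,y,z) \<in> {(1,4,5),(4,5,1),(5,1,4)} then 1
      else if (x,y,z) \<in> {(1,5,4),(5,4,1),(4,1,5)} then -1 else 0)"

lemma schouten_pencil_shape:
  fixes P :: "real^5 \<Rightarrow> real^5^5"
  assumes Pu: "\<And>i j. P u $ i $ j = pencil_const t a b $ i $ j + E_x_p0 $ i $ j * U + E_x_p1 $ i $ j * V"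
    and Pd: "\<And>e i j. pd e (\<lambda>v. P v $ i $ j) u = E_x_p0 $ i $ j * DU e + E_x_p1 $ i $ j * DV e"
    and D0: "DU 4 = 0" "DU 5 = 0" "DV 4 = 0" "DV 5 = 0"
  shows "schouten P u x y z
    = sign145 x y z * (U * DV 1 - (1 + t * a) * DV 3 - V * DU 1 + (1 + t * b) * DU 2)"
proof -
  define XU where "XU x = (\<Sum>e\<in>UNIV. P u $ x $ e * DU e)" for x
  define XV where "XV x = (\<Sum>e\<in>UNIV. P u $ x $ e * DV e)" for x
  have schouten: "schouten P u x y z = E_x_p0 $ y $ z * XU x + E_x_p1 $ y $ z * XV x
     + E_x_p0 $ z $ x * XU y + E_x_p1 $ z $ x * XV y + E_x_p0 $ x $ y * XU z + E_x_p1 $ x $ y * XV z"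
    unfolding schouten_def Pd XU_def XV_def
    by (simp add: sum.distrib sum_distrib_left distrib_left mult_ac)
  have "XU 1 = 0" "XU 2 = 0" "XU 3 = 0" "XU 4 = U * DU 1 - (1 + t * a) * DU 3"
    "XU 5 = V * DU 1 - (1 + t * b) * DU 2"
    "XV 1 = 0" "XV 2 = 0" "XV 3 = 0" "XV 4 = U * DV 1 - (1 + t * a) * DV 3"
    "XV 5 = V * DV 1 - (1 + t * b) * DV 2"
    unfolding XU_def XV_def
    by (simp_all add: sum_5 Pu D0 pencil_const_def E_x_p0_def E_x_p1_def algebra_simps)
  then show ?thesis
    unfolding schouten sign145_def
    using exhaust_5[of x] exhaust_5[of y] exhaust_5[of z]
    by (elim disjE) (simp_all add: E_x_p0_def E_x_p1_def)
qed

definition hirota :: "real \<Rightarrow> real \<Rightarrow> (real^3 \<Rightarrow> real) \<Rightarrow> real^3 \<Rightarrow> real" where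
  "hirota a b w q = (b - a) * pd 1 w q * pd 3 (pd 2 w) q + a * pd 2 w q * pd 1 (pd 3 w) q
     - b * pd 3 w q * pd 2 (pd 1 w) q"

lemma pencil_has_derivative:
  fixes w :: "real^3 \<Rightarrow> real"
  assumes w: "C2_on B w" and uB: "proj3 u \<in> B" and w1: "pd 1 w (proj3 u) \<noteq> 0"
  shows "((\<lambda>v. pencil w a b t v $ i $ j) has_derivative (\<lambda>x.
      E_x_p0 $ i $ j * frechet_derivative (\<lambda>q. pd 3 w q / pd 1 w q) (at (proj3 u)) (proj3 x)
    + E_x_p1 $ i $ j * frechet_derivative (\<lambda>q. pd 2 w q / pd 1 w q) (at (proj3 u)) (proj3 x))) (at u)"
proof -
  have "((\<lambda>v. pd j w (proj3 v) / pd 1 w (proj3 v)) has_derivative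
      (\<lambda>x. frechet_derivative (\<lambda>q. pd j w q / pd 1 w q) (at (proj3 u)) (proj3 x))) (at u)" for j
    using has_derivative_comp_proj3[OF ratio_pd_derivative(1)[OF w uB w1]] .
  from has_derivative_add[OF has_derivative_add[OF has_derivative_const
        has_derivative_mult_right[OF this[of 3]]] has_derivative_mult_right[OF this[of 2]]]
  show ?thesis
    unfolding pencil_entry by (rule has_derivative_eq_rhs) simp
qed

lemma schouten_pencil:
  fixes w :: "real^3 \<Rightarrow> real"
  assumes B: "open B" and w: "C2_on B w" and uB: "proj3 u \<in> B" and w1: "pd 1 w (proj3 u) \<noteq> 0"
  shows "schouten (pencil w a b t) u x y z
    = sign145 x y z * (t * hirota a b w (proj3 u) / (pd 1 w (proj3 u) * pd 1 w (proj3 u)))"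
proof -
  define q where "q = proj3 u"
  define DU where "DU e = frechet_derivative (\<lambda>q. pd 3 w q / pd 1 w q) (at q) (proj3 (axis e 1))" for e
  define DV where "DV e = frechet_derivative (\<lambda>q. pd 2 w q / pd 1 w q) (at q) (proj3 (axis e 1))" for e
  have "linear (frechet_derivative (\<lambda>q. pd j w q / pd 1 w q) (at q))" for j
    using ratio_pd_derivative(1)[OF w uB w1] frechet_derivative_works has_derivative_linear
    unfolding q_def by blast
  then have D0: "DU 4 = 0" "DU 5 = 0" "DV 4 = 0" "DV 5 = 0"
    unfolding DU_def DV_def proj3_axis by (simp_all add: linear_0)
  have "schouten (pencil w a b t) u x y z = sign145 x y z *
      (pd 3 w q / pd 1 w q * DV 1 - (1 + t * a) * DV 3 - pd 2 w q / pd 1 w q * DU 1 + (1 + t * b) * DU 2)"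
    using pencil_entry has_derivative_imp_pd[OF pencil_has_derivative[OF w uB w1]] D0
    unfolding DU_def DV_def q_def by (rule schouten_pencil_shape)
  also have "pd 3 w q / pd 1 w q * DV 1 - (1 + t * a) * DV 3 - pd 2 w q / pd 1 w q * DU 1 + (1 + t * b) * DU 2
      = t * hirota a b w q / (pd 1 w q * pd 1 w q)"
  proof -
    have ratio: "DU 1 = (pd 1 (pd 3 w) q * pd 1 w q - pd 3 w q * pd 1 (pd 1 w) q) / (pd 1 w q * pd 1 w q)"
      "DU 2 = (pd 2 (pd 3 w) q * pd 1 w q - pd 3 w q * pd 2 (pd 1 w) q) / (pd 1 w q * pd 1 w q)"
      "DV 1 = (pd 1 (pd 2 w) q * pd 1 w q - pd 2 w q * pd 1 (pd 1 w) q) / (pd 1 w q * pd 1 w q)"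
      "DV 3 = (pd 3 (pd 2 w) q * pd 1 w q - pd 2 w q * pd 3 (pd 1 w) q) / (pd 1 w q * pd 1 w q)"
      unfolding DU_def DV_def proj3_axis using ratio_pd_derivative(2)[OF w uB w1] q_def by simp_all
    moreover have "pd 1 (pd 2 w) q = pd 2 (pd 1 w) q" "pd 1 (pd 3 w) q = pd 3 (pd 1 w) q"
       "pd 2 (pd 3 w) q = pd 3 (pd 2 w) q"
      using C2_on_pd_commute[OF B _ w] uB unfolding q_def by auto
    moreover have "pd 1 w q \<noteq> 0"
      using w1 unfolding q_def .
    ultimately show ?thesis
      unfolding ratio hirota_def by (simp add: field_simps)
  qed
  finally show ?thesis
    unfolding q_def .
qed

lemma sign145_nonzero: "\<not> (\<forall>x y z. sign145 x y z = 0)"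
  by (metis sign145_def insertCI zero_neq_one)

lemma is_poisson_pencil_iff:
  fixes w :: "real^3 \<Rightarrow> real"
  assumes B: "open B" and w: "C2_on B w" and w1: "\<forall>q\<in>B. pd 1 w q \<noteq> 0"
  shows "is_poisson {u. proj3 u \<in> B} (pencil w a b t) \<longleftrightarrow> t = 0 \<or> (\<forall>q\<in>B. hirota a b w q = 0)"
proof -
  have "is_poisson {u. proj3 u \<in> B} (pencil w a b t)
      \<longleftrightarrow> (\<forall>u\<in>{u. proj3 u \<in> B}. \<forall>x y z. schouten (pencil w a b t) u x y z = 0)"
  proof (intro is_poisson_iff_schouten_eq_0 open_proj3_vimage[OF B] pencil_antisym)
    fix u i j assume "u \<in> {u. proj3 u \<in> B}"
    then show "(\<lambda>v. pencil w a b t v $ i $ j) differentiable at u"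
      using pencil_has_derivative[OF w _ w1[rule_format]] unfolding differentiable_def by blast
  qed
  also have "\<dots> \<longleftrightarrow> t = 0 \<or> (\<forall>u. proj3 u \<in> B \<longrightarrow> hirota a b w (proj3 u) = 0)"
    using w1 by (simp add: schouten_pencil[OF B w] sign145_nonzero)
  also have "\<dots> \<longleftrightarrow> t = 0 \<or> (\<forall>q\<in>B. hirota a b w q = 0)"
  proof -
    have "proj3 (vector [q $ 1, q $ 2, q $ 3, 0, 0]) = q" for q
      by (simp add: vec_eq_iff forall_3)
    then show ?thesis by metis
  qed
  finally show ?thesis .
qed

lemma is_poisson_P1_mat: "open U \<Longrightarrow> is_poisson U (P1_mat a b)"
proof (subst is_poisson_iff_schouten_eq_0)
  show "P1_mat a b u $ i $ j = - P1_mat a b u $ j $ i" for u i j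
    using exhaust_5[of i] exhaust_5[of j] by (elim disjE) (simp_all add: P1_mat_def)
qed (auto simp: schouten_def pd_const P1_mat_def)

theorem corollary4p2:
  fixes a b :: real and w :: "real^3 \<Rightarrow> real" and B :: "(real^3) set"
  assumes "a \<noteq> 0" and "b \<noteq> 0" and "a \<noteq> b"
    and "open B" and "C2_on B w" and "\<forall>q\<in>B. pd 1 w q \<noteq> 0"
  shows "compatible_poisson_pencil {u. proj3 u \<in> B} (P0_mat w) (P1_mat a b) \<longleftrightarrow>
    (\<forall>q\<in>B. (b - a) * pd 1 w q * pd 3 (pd 2 w) q + a * pd 2 w q * pd 1 (pd 3 w) q
             - b * pd 3 w q * pd 2 (pd 1 w) q = 0)"
proof -
  note pencil_iff = is_poisson_pencil_iff[OF assms(4-6), of a b]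
  have "is_poisson {u. proj3 u \<in> B} (P0_mat w)"
    using pencil_iff[of 0] by (simp add: pencil_def)
  moreover have "is_poisson {u. proj3 u \<in> B} (P1_mat a b)"
    using is_poisson_P1_mat open_proj3_vimage assms(4) by blast
  ultimately show ?thesis
    using pencil_iff[of 1] pencil_iff
    unfolding compatible_poisson_pencil_def pencil_def hirota_def by auto
qed

end
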